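(* Let $\Sigma\in\mathcal{G}_n$, $W=W(\Sigma)$, and let $Q_0$ be the unique regular rational orthogonal matrix with $Q_0^{\rm T}S(\Sigma)Q_0=S(\Sigma^{\rm T})$, with level $\ell_0$. Let $p$ be an odd prime with $p\nmid\ell_0$. If $z$ is an integral vector with $z\not\equiv0\pmod p$ and $W^{\rm T}z\equiv0\pmod p$, then $z^{\rm T}z\not\equiv0\pmod p$.
   Context: An oriented graph on vertices $v_1,\dots,v_n$ is a simple graph with each edge directed; its skew-adjacency matrix $S(\Sigma)=(s_{ij})$ has $s_{ij}=1$ if $(v_i,v_j)$ is an arc, $-1$ if $(v_j,v_i)$ is an arc, $0$ otherwise. The converse $\Sigma^{\rm T}$ reverses every arc, so $S(\Sigma^{\rm T})=-S(\Sigma)$. With $e$ the all-one vector, $W(\Sigma)=[e,Se,\dots,S^{n-1}e]$, $S=S(\Sigma)$. $\mathcal{G}_n$ is the set of $n$-vertex oriented graphs with $2^{-\lfloor n/2\rfloor}\det W(\Sigma)$ an odd square-free integer. A rational orthogonal matrix $Q$ is regular if $Qe=e$; its level is the least positive integer $k$ with $kQ$ integral. Since $\det W(\Sigma)\ne0$, $Q_0$ exists and is unique. *)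

theory Defs
  imports "Jordan_Normal_Form.Determinant" "HOL-Computational_Algebra.Squarefree"
          "HOL-Computational_Algebra.Primes"
begin

text \<open>An oriented graph on vertices 0,...,n-1 is given by its arc relation Arc:
  Arc i j means (v_i, v_j) is an arc.\<close>
definition oriented_graph :: "nat \<Rightarrow> (nat \<Rightarrow> nat \<Rightarrow> bool) \<Rightarrow> bool" where
  "oriented_graph n Arc \<longleftrightarrow>
     (\<forall>i<n. \<not> Arc i i) \<and> (\<forall>i<n. \<forall>j<n. \<not> (Arc i j \<and> Arc j i))"

definition skew_adj :: "nat \<Rightarrow> (nat \<Rightarrow> nat \<Rightarrow> bool) \<Rightarrow> int mat" where
  "skew_adj n Arc = mat n n (\<lambda>(i,j). if Arc i j then 1 else if Arc j i then -1 else 0)"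

definition converse_graph :: "(nat \<Rightarrow> nat \<Rightarrow> bool) \<Rightarrow> (nat \<Rightarrow> nat \<Rightarrow> bool)" where
  "converse_graph Arc = (\<lambda>i j. Arc j i)"

definition all_ones :: "nat \<Rightarrow> 'a :: one vec" where
  "all_ones n = vec n (\<lambda>_. 1)"

definition walk_matrix :: "nat \<Rightarrow> int mat \<Rightarrow> int mat" where
  "walk_matrix n S = mat n n (\<lambda>(i,k). ((S ^\<^sub>m k) *\<^sub>v all_ones n) $ i)"

definition W_of :: "nat \<Rightarrow> (nat \<Rightarrow> nat \<Rightarrow> bool) \<Rightarrow> int mat" where
  "W_of n Arc = walk_matrix n (skew_adj n Arc)"

definition in_G :: "nat \<Rightarrow> (nat \<Rightarrow> nat \<Rightarrow> bool) \<Rightarrow> bool" where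
  "in_G n Arc \<longleftrightarrow> oriented_graph n Arc \<and>
     (\<exists>m::int. det (W_of n Arc) = 2 ^ (n div 2) * m \<and> odd m \<and> squarefree m)"

definition regular_rat_orthogonal :: "nat \<Rightarrow> rat mat \<Rightarrow> bool" where
  "regular_rat_orthogonal n Q \<longleftrightarrow> Q \<in> carrier_mat n n \<and>
     transpose_mat Q * Q = 1\<^sub>m n \<and> Q *\<^sub>v all_ones n = all_ones n"

definition level :: "rat mat \<Rightarrow> nat" where
  "level Q = (LEAST k::nat. 0 < k \<and>
     (\<forall>i<dim_row Q. \<forall>j<dim_col Q. of_nat k * Q $$ (i,j) \<in> \<int>))"

end

theory Submission
  imports Defs
begin

text \<open>As \<open>p\<^sup>2\<close> does not divide \<open>det W\<close>, any two kernel vectors of \<open>W\<close>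
  (or of \<open>W\<^sup>T\<close>) modulo \<open>p\<close> are proportional. The integral matrix \<open>X = l\<^sub>0 Q\<^sub>0\<close> satisfies
  \<open>X\<^sup>2 = l\<^sub>0\<^sup>2 I\<close>, anticommutes with \<open>S\<close> and multiplies the columns \<open>S\<^sup>k e\<close> of \<open>W\<close> by
  \<open>\<plusminus>l\<^sub>0\<close>. Hence \<open>X z \<equiv> \<plusminus>l\<^sub>0 z\<close>, and as \<open>S z\<close> is again a left kernel vector on which
  \<open>X\<close> acts with the opposite sign, \<open>S z \<equiv> 0\<close>.

  Now suppose \<open>z\<^sup>T z \<equiv> 0\<close>. Then \<open>z\<close> is in the column space of \<open>W\<close> modulo \<open>p\<close>:
  \<open>W t \<equiv> c z\<close> with \<open>c \<not>\<equiv> 0\<close>, and \<open>t\<close> can be chosen with last entry \<open>0\<close>. Shifting the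
  entries of \<open>t\<close> down by one gives a right kernel vector \<open>y\<close> with \<open>W y = S W t\<close>, so that
  \<open>z\<^sup>T W y = -(S z)\<^sup>T (W t - c z) \<equiv> 0\<close> modulo \<open>p\<^sup>2\<close>. But a left and a right kernel vector
  modulo \<open>p\<close> can pair to a multiple of \<open>p\<^sup>2\<close> only if \<open>p\<^sup>2\<close> divides \<open>det W\<close>.\<close>

section \<open>Divisibility of vectors and determinants\<close>

definition vec_dvd :: "int \<Rightarrow> int vec \<Rightarrow> bool" where
  "vec_dvd q v \<longleftrightarrow> (\<forall>i<dim_vec v. q dvd v $ i)"

lemma vec_dvdI: "(\<And>i. i < dim_vec v \<Longrightarrow> q dvd v $ i) \<Longrightarrow> vec_dvd q v"
  by (simp add: vec_dvd_def)

lemma vec_dvdD: "vec_dvd q v \<Longrightarrow> i < dim_vec v \<Longrightarrow> q dvd v $ i"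
  by (simp add: vec_dvd_def)

lemma vec_dvd_mult_mat_vec:
  fixes M :: "int mat"
  assumes "vec_dvd q v" and "dim_col M = dim_vec v"
  shows "vec_dvd q (M *\<^sub>v v)"
proof (rule vec_dvdI)
  fix r assume "r < dim_vec (M *\<^sub>v v)"
  then have "(M *\<^sub>v v) $ r = (\<Sum>k<dim_vec v. M $$ (r, k) * v $ k)"
    using assms(2) by (simp add: scalar_prod_def atLeast0LessThan)
  also have "q dvd \<dots>"
    using assms(1) by (intro dvd_sum dvd_mult) (simp add: vec_dvd_def)
  finally show "q dvd (M *\<^sub>v v) $ r" .
qed

lemma vec_dvd_scalar_prod:
  fixes v w :: "int vec"
  assumes "vec_dvd q v" and "dim_vec w = dim_vec v"
  shows "q dvd v \<bullet> w"
  unfolding scalar_prod_def using assms by (intro dvd_sum dvd_mult2) (auto simp: vec_dvd_def)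

lemma mult_mat_vec_lincomb:
  fixes M :: "'a :: comm_ring_1 mat"
  assumes "M \<in> carrier_mat nr n" "v \<in> carrier_vec n" "w \<in> carrier_vec n"
  shows "M *\<^sub>v (x \<cdot>\<^sub>v v - y \<cdot>\<^sub>v w) = x \<cdot>\<^sub>v (M *\<^sub>v v) - y \<cdot>\<^sub>v (M *\<^sub>v w)"
  using assms by (subst mult_minus_distrib_mat_vec[of M nr n]) auto

lemma det_eq_mult_det_row_div:
  fixes A :: "int mat"
  assumes A: "A \<in> carrier_mat n n" and k: "k < n" and row: "\<And>j. j < n \<Longrightarrow> a dvd A $$ (k, j)"
  shows "det A = a * det (mat n n (\<lambda>(i, j). if i = k then A $$ (i, j) div a else A $$ (i, j)))"
proof -
  let ?B = "mat n n (\<lambda>(i, j). if i = k then A $$ (i, j) div a else A $$ (i, j))"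
  have "A = multrow k a ?B"
    by (rule eq_matI) (use A row in auto)
  then show ?thesis
    using det_multrow[OF k, of ?B a] by simp
qed

lemma det_eq_mult_det_col_div:
  fixes A :: "int mat"
  assumes A: "A \<in> carrier_mat n n" and k: "k < n" and col: "\<And>i. i < n \<Longrightarrow> a dvd A $$ (i, k)"
  shows "det A = a * det (mat n n (\<lambda>(i, j). if j = k then A $$ (i, j) div a else A $$ (i, j)))"
proof -
  let ?B = "mat n n (\<lambda>(i, j). if j = k then A $$ (i, j) div a else A $$ (i, j))"
  have "det A = det (transpose_mat A)"
    using A by (simp add: det_transpose)
  also have "\<dots> = a * det (mat n n (\<lambda>(i, j). if i = k then A\<^sup>T $$ (i, j) div a else A\<^sup>T $$ (i, j)))"
    by (rule det_eq_mult_det_row_div) (use A k col in auto)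
  also have "mat n n (\<lambda>(i, j). if i = k then A\<^sup>T $$ (i, j) div a else A\<^sup>T $$ (i, j)) = transpose_mat ?B"
    by (rule eq_matI) (use A in auto)
  finally show ?thesis
    using det_transpose[of ?B n] by simp
qed

lemma dvd_det_if_col_dvd:
  fixes A :: "int mat"
  assumes "A \<in> carrier_mat n n" "k < n" "\<And>i. i < n \<Longrightarrow> a dvd A $$ (i, k)"
  shows "a dvd det A"
  using det_eq_mult_det_col_div[OF assms] by simp

lemma sq_dvd_det_if_two_cols_dvd:
  fixes A :: "int mat"
  assumes A: "A \<in> carrier_mat n n" and c: "c1 < n" "c2 < n" "c1 \<noteq> c2"
    and col1: "\<And>i. i < n \<Longrightarrow> a dvd A $$ (i, c1)" and col2: "\<And>i. i < n \<Longrightarrow> a dvd A $$ (i, c2)"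
  shows "a^2 dvd det A"
proof -
  let ?B = "mat n n (\<lambda>(i, j). if j = c1 then A $$ (i, j) div a else A $$ (i, j))"
  have "a dvd det ?B"
    by (rule dvd_det_if_col_dvd[of _ n c2]) (use c col2 in auto)
  then show ?thesis
    using det_eq_mult_det_col_div[OF A c(1) col1] by (simp add: power2_eq_square)
qed

lemma sq_dvd_det_if_row_col_dvd:
  fixes A :: "int mat"
  assumes A: "A \<in> carrier_mat n n" and ij: "i < n" "j < n"
    and row: "\<And>k. k < n \<Longrightarrow> a dvd A $$ (j, k)" and col: "\<And>k. k < n \<Longrightarrow> a dvd A $$ (k, i)"
    and corner: "a^2 dvd A $$ (j, i)"
  shows "a^2 dvd det A"
proof -
  let ?B = "mat n n (\<lambda>(r, k). if r = j then A $$ (r, k) div a else A $$ (r, k))"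
  have "a dvd A $$ (j, i) div a"
    using corner by (auto simp: power2_eq_square)
  then have "a dvd det ?B"
    by (intro dvd_det_if_col_dvd[of _ n i]) (use ij col in auto)
  then show ?thesis
    using det_eq_mult_det_row_div[OF A ij(2) row] by (simp add: power2_eq_square)
qed

section \<open>Kernels modulo a prime\<close>

lemma prime_sq_dvd_mult_cancel:
  fixes q x y :: int
  assumes "prime q" and "\<not> q dvd x" and "q^2 dvd x * y"
  shows "q^2 dvd y"
proof -
  have "coprime (q^2) x"
    using assms(1,2) by (simp add: prime_imp_coprime)
  then show ?thesis
    using assms(3) by (simp add: coprime_dvd_mult_right_iff)
qed

lemma replace_col_mult_vec_if_zero:
  assumes "A \<in> carrier_mat nr n" and "c \<in> carrier_vec n" and "c $ i = 0"
  shows "replace_col A w i *\<^sub>v c = A *\<^sub>v c"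
  by (rule eq_vecI) (use assms in \<open>auto simp: replace_col_def scalar_prod_def intro!: sum.cong\<close>)

text \<open>By Cramer's rule, replacing columns \<open>i\<close> and \<open>j\<close> of \<open>M\<close> by \<open>M a\<close> and \<open>M (a\<^sub>i b - b\<^sub>i a)\<close>
  multiplies \<open>det M\<close> by \<open>a\<^sub>i (a\<^sub>i b\<^sub>j - a\<^sub>j b\<^sub>i)\<close> and makes both columns divisible by \<open>q\<close>.\<close>

lemma right_kernel_minor_dvd_if_entry_not_dvd:
  fixes M :: "int mat" and q :: int
  assumes M: "M \<in> carrier_mat n n" and a: "a \<in> carrier_vec n" and b: "b \<in> carrier_vec n"
    and q: "prime q" and ndet: "\<not> q^2 dvd det M"
    and Ma: "vec_dvd q (M *\<^sub>v a)" and Mb: "vec_dvd q (M *\<^sub>v b)"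
    and ij: "i < n" "j < n" "i \<noteq> j" and ai: "\<not> q dvd a $ i"
  shows "q dvd a $ i * b $ j - a $ j * b $ i"
proof (rule ccontr)
  assume minor: "\<not> ?thesis"
  define c where "c = a $ i \<cdot>\<^sub>v b - b $ i \<cdot>\<^sub>v a"
  have c: "c \<in> carrier_vec n" and ci: "c $ i = 0" and cj: "c $ j = a $ i * b $ j - a $ j * b $ i"
    using a b ij by (auto simp: c_def algebra_simps)
  define M1 where "M1 = replace_col M (M *\<^sub>v a) i"
  define M2 where "M2 = replace_col M1 (M1 *\<^sub>v c) j"
  have M1: "M1 \<in> carrier_mat n n"
    using M by (simp add: M1_def replace_col_def)
  have M1c: "M1 *\<^sub>v c = a $ i \<cdot>\<^sub>v (M *\<^sub>v b) - b $ i \<cdot>\<^sub>v (M *\<^sub>v a)"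
    unfolding M1_def using replace_col_mult_vec_if_zero[OF M c ci] mult_mat_vec_lincomb[OF M b a]
    by (simp add: c_def)
  have "det M2 = (c $ j * a $ i) * det M"
    using cramer_lemma_mat[OF M1 c ij(2)] cramer_lemma_mat[OF M a ij(1)]
    by (simp add: M2_def M1_def)
  moreover have "q^2 dvd det M2"
  proof (rule sq_dvd_det_if_two_cols_dvd[of M2 n i j])
    fix r assume r: "r < n"
    show "q dvd M2 $$ (r, i)"
      using r ij M Ma by (simp add: M2_def M1_def replace_col_def vec_dvd_def)
    show "q dvd M2 $$ (r, j)"
      using r ij M M1 Ma Mb by (simp add: M2_def M1c replace_col_def vec_dvd_def)
  qed (use M1 ij in \<open>simp_all add: M2_def replace_col_def\<close>)
  moreover have "\<not> q dvd c $ j * a $ i"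
    using minor ai q cj by (simp add: prime_dvd_mult_iff)
  ultimately show False
    using prime_sq_dvd_mult_cancel[OF q] ndet by metis
qed

text \<open>With \<open>q\<^sup>2\<close> not dividing \<open>det M\<close>, the kernel of \<open>M\<close> modulo \<open>q\<close> is at most one-dimensional.\<close>

lemma right_kernel_minor_dvd:
  fixes M :: "int mat" and q :: int
  assumes M: "M \<in> carrier_mat n n" and a: "a \<in> carrier_vec n" and b: "b \<in> carrier_vec n"
    and q: "prime q" and ndet: "\<not> q^2 dvd det M"
    and Ma: "vec_dvd q (M *\<^sub>v a)" and Mb: "vec_dvd q (M *\<^sub>v b)"
    and ij: "i < n" "j < n"
  shows "q dvd a $ i * b $ j - a $ j * b $ i"
proof -
  note minor = right_kernel_minor_dvd_if_entry_not_dvd[OF M a b q ndet Ma Mb]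
  consider "i = j" | "q dvd a $ i" "q dvd a $ j" | "i \<noteq> j" "\<not> q dvd a $ i" | "i \<noteq> j" "\<not> q dvd a $ j"
    by blast
  then show ?thesis
  proof cases
    case 4
    then have "q dvd a $ j * b $ i - a $ i * b $ j"
      using minor ij by blast
    then show ?thesis
      by (metis dvd_minus_iff minus_diff_eq)
  qed (use minor ij in auto)
qed

lemma right_kernel_proportional:
  fixes M :: "int mat" and q :: int
  assumes M: "M \<in> carrier_mat n n" and a: "a \<in> carrier_vec n" and b: "b \<in> carrier_vec n"
    and q: "prime q" and ndet: "\<not> q^2 dvd det M"
    and Ma: "vec_dvd q (M *\<^sub>v a)" and Mb: "vec_dvd q (M *\<^sub>v b)" and k: "k < n"
  shows "vec_dvd q (a $ k \<cdot>\<^sub>v b - b $ k \<cdot>\<^sub>v a)"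
proof (rule vec_dvdI)
  fix i assume "i < dim_vec (a $ k \<cdot>\<^sub>v b - b $ k \<cdot>\<^sub>v a)"
  then have i: "i < n" using a by simp
  have "q dvd a $ i * b $ k - a $ k * b $ i"
    by (rule right_kernel_minor_dvd[OF M a b q ndet Ma Mb i k])
  then have "q dvd - (a $ i * b $ k - a $ k * b $ i)"
    by (simp only: dvd_minus_iff)
  then show "q dvd (a $ k \<cdot>\<^sub>v b - b $ k \<cdot>\<^sub>v a) $ i"
    using a b i by (simp add: algebra_simps)
qed

lemma dvd_det_if_right_kernel:
  fixes M :: "int mat" and q :: int
  assumes M: "M \<in> carrier_mat n n" and a: "a \<in> carrier_vec n" and q: "prime q"
    and Ma: "vec_dvd q (M *\<^sub>v a)" and i: "i < n" and ai: "\<not> q dvd a $ i"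
  shows "q dvd det M"
proof -
  have "q dvd det (replace_col M (M *\<^sub>v a) i)"
    by (rule dvd_det_if_col_dvd[of _ n i]) (use M i Ma in \<open>auto simp: replace_col_def vec_dvd_def\<close>)
  then have "q dvd a $ i * det M"
    by (simp add: cramer_lemma_mat[OF M a i])
  then show ?thesis
    using q ai by (simp add: prime_dvd_mult_iff)
qed

text \<open>Replacing column \<open>j\<close> of \<open>W\<close> by \<open>W b\<close>, and then column \<open>i\<close> of the transpose by its
  product with \<open>a\<close>, multiplies \<open>det W\<close> by \<open>a\<^sub>i b\<^sub>j\<close>; the result has row \<open>j\<close> and column \<open>i\<close>
  divisible by \<open>q\<close>, meeting in the entry \<open>a \<bullet> W b\<close>.\<close>

lemma sq_dvd_det_if_kernels_orthogonal:
  fixes W :: "int mat" and q :: int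
  assumes W: "W \<in> carrier_mat n n" and a: "a \<in> carrier_vec n" and b: "b \<in> carrier_vec n"
    and q: "prime q"
    and Wa: "vec_dvd q (transpose_mat W *\<^sub>v a)" and Wb: "vec_dvd q (W *\<^sub>v b)"
    and i: "i < n" "\<not> q dvd a $ i" and j: "j < n" "\<not> q dvd b $ j"
    and orth: "q^2 dvd a \<bullet> (W *\<^sub>v b)"
  shows "q^2 dvd det W"
proof -
  define W1 where "W1 = replace_col W (W *\<^sub>v b) j"
  define M where "M = replace_col (transpose_mat W1) (transpose_mat W1 *\<^sub>v a) i"
  have W1: "W1 \<in> carrier_mat n n"
    using W by (simp add: W1_def replace_col_def)
  have W1a: "(transpose_mat W1 *\<^sub>v a) $ r
      = (if r = j then a \<bullet> (W *\<^sub>v b) else (transpose_mat W *\<^sub>v a) $ r)" if "r < n" for r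
    using W a b that
    by (auto simp: W1_def replace_col_def scalar_prod_def mult.commute intro: sum.cong)
  have "det M = (a $ i * b $ j) * det W"
    using cramer_lemma_mat[of "transpose_mat W1" n a i] cramer_lemma_mat[OF W b j(1)] W1 a i
    by (simp add: M_def W1_def det_transpose)
  moreover have "q^2 dvd det M"
  proof (rule sq_dvd_det_if_row_col_dvd[of M n i j])
    have orth': "q dvd a \<bullet> (W *\<^sub>v b)"
      using orth by (simp add: power2_eq_square dvd_mult_left)
    show "q dvd M $$ (j, k)" if "k < n" for k
      using that i j W1 W1a[of j] orth' Wb W
      by (auto simp: M_def W1_def replace_col_def vec_dvd_def)
    show "q dvd M $$ (k, i)" if "k < n" for k
      using that i j W1 W1a[of k] orth' Wa W
      by (auto simp: M_def replace_col_def vec_dvd_def)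
    show "q^2 dvd M $$ (j, i)"
      using i j W1 W1a[of j] orth by (simp add: M_def replace_col_def)
  qed (use W1 i j in \<open>simp_all add: M_def replace_col_def\<close>)
  moreover have "\<not> q dvd a $ i * b $ j"
    using i j q by (simp add: prime_dvd_mult_iff)
  ultimately show ?thesis
    using prime_sq_dvd_mult_cancel[OF q] by metis
qed

lemma adj_mult_vec_dvd_if_isotropic:
  fixes M :: "int mat" and q :: int
  assumes M: "M \<in> carrier_mat n n" and z: "z \<in> carrier_vec n" and q: "prime q"
    and qdet: "q dvd det M" and ndet: "\<not> q^2 dvd det M"
    and Mz: "vec_dvd q (transpose_mat M *\<^sub>v z)" and i: "i < n" "\<not> q dvd z $ i"
    and zz: "q dvd z \<bullet> z"
  shows "vec_dvd q (adj_mat M *\<^sub>v z)"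
proof (rule vec_dvdI)
  fix k assume "k < dim_vec (adj_mat M *\<^sub>v z)"
  then have k: "k < n"
    using adj_mat(1)[OF M] by simp
  define r where "r = row (adj_mat M) k"
  have r: "r \<in> carrier_vec n"
    using adj_mat(1)[OF M] k by (simp add: r_def)
  have "vec_dvd q (transpose_mat M *\<^sub>v r)"
  proof (rule vec_dvdI)
    fix j assume "j < dim_vec (transpose_mat M *\<^sub>v r)"
    then have j: "j < n"
      using M by simp
    have "(transpose_mat M *\<^sub>v r) $ j = (adj_mat M * M) $$ (k, j)"
      using M adj_mat(1)[OF M] r j k by (simp add: r_def comm_scalar_prod[of _ n])
    then show "q dvd (transpose_mat M *\<^sub>v r) $ j"
      using adj_mat(3)[OF M] j k qdet by simp
  qed
  then have "vec_dvd q (z $ i \<cdot>\<^sub>v r - r $ i \<cdot>\<^sub>v z)"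
    using right_kernel_proportional[of "transpose_mat M" n z r q i] M z r q ndet Mz i
    by (simp add: det_transpose)
  then have "q dvd (z $ i \<cdot>\<^sub>v r - r $ i \<cdot>\<^sub>v z) \<bullet> z"
    by (rule vec_dvd_scalar_prod) (use r z in simp)
  also have "(z $ i \<cdot>\<^sub>v r - r $ i \<cdot>\<^sub>v z) \<bullet> z = z \<bullet> (z $ i \<cdot>\<^sub>v r - r $ i \<cdot>\<^sub>v z)"
    using r z by (intro comm_scalar_prod[of _ n]) auto
  also have "\<dots> = z $ i * (r \<bullet> z) - r $ i * (z \<bullet> z)"
    using r z by (simp add: scalar_prod_minus_distrib[of z n] comm_scalar_prod[of z n r])
  finally have "q dvd z $ i * (r \<bullet> z)"
    using dvd_mult[OF zz, of "r $ i"] by (metis diff_add_cancel dvd_add)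
  then show "q dvd (adj_mat M *\<^sub>v z) $ k"
    using q i k adj_mat(1)[OF M] by (simp add: r_def prime_dvd_mult_iff)
qed

text \<open>The column space of \<open>M\<close> modulo \<open>q\<close> is the orthogonal complement of the left kernel,
  which is spanned by \<open>z\<close>; so \<open>z\<close> lies in it exactly when \<open>z \<bullet> z \<equiv> 0\<close>.\<close>

lemma isotropic_left_kernel_in_image:
  fixes M :: "int mat" and q :: int
  assumes M: "M \<in> carrier_mat n n" and z: "z \<in> carrier_vec n" and q: "prime q"
    and c: "det M = q * c" and ndet: "\<not> q^2 dvd det M"
    and Mz: "vec_dvd q (transpose_mat M *\<^sub>v z)" and i: "i < n" "\<not> q dvd z $ i"
    and zz: "q dvd z \<bullet> z"
  shows "\<exists>t \<in> carrier_vec n. M *\<^sub>v t = c \<cdot>\<^sub>v z"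
proof -
  have A: "adj_mat M \<in> carrier_mat n n"
    by (rule adj_mat(1)[OF M])
  have "vec_dvd q (adj_mat M *\<^sub>v z)"
    using adj_mult_vec_dvd_if_isotropic[OF M z q _ ndet Mz i zz] c by simp
  define t where "t = vec n (\<lambda>k. (adj_mat M *\<^sub>v z) $ k div q)"
  have qt: "q \<cdot>\<^sub>v t = adj_mat M *\<^sub>v z"
    by (rule eq_vecI) (use \<open>vec_dvd q (adj_mat M *\<^sub>v z)\<close> A in \<open>auto simp: t_def vec_dvd_def\<close>)
  have "q \<cdot>\<^sub>v (M *\<^sub>v t) = M *\<^sub>v (q \<cdot>\<^sub>v t)"
    using M by (auto simp: t_def)
  also have "\<dots> = (M * adj_mat M) *\<^sub>v z"
    using M A z by (simp add: qt)
  also have "\<dots> = q \<cdot>\<^sub>v (c \<cdot>\<^sub>v z)"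
    using adj_mat(2)[OF M] c z by (auto simp: smult_smult_assoc)
  finally have eq: "q \<cdot>\<^sub>v (M *\<^sub>v t) = q \<cdot>\<^sub>v (c \<cdot>\<^sub>v z)" .
  have "M *\<^sub>v t = c \<cdot>\<^sub>v z"
  proof (rule eq_vecI)
    fix k assume "k < dim_vec (c \<cdot>\<^sub>v z)"
    then show "(M *\<^sub>v t) $ k = (c \<cdot>\<^sub>v z) $ k"
      using arg_cong[OF eq, of "\<lambda>v. v $ k"] M z q by (simp add: prime_gt_0_int less_not_refl2)
  qed (use M z in simp)
  then show ?thesis
    by (auto simp: t_def)
qed

text \<open>Otherwise \<open>M (adj M / q) = (det M / q) I\<close>, and taking determinants shows
  \<open>q | det M / q\<close>.\<close>

lemma adj_mat_not_dvd:
  fixes M :: "int mat" and q :: int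
  assumes M: "M \<in> carrier_mat n n" and q: "prime q"
    and qdet: "q dvd det M" and ndet: "\<not> q^2 dvd det M"
  shows "\<exists>i<n. \<exists>j<n. \<not> q dvd adj_mat M $$ (i, j)"
proof (rule ccontr)
  assume "\<not> ?thesis"
  then have adj_dvd: "q dvd adj_mat M $$ (i, j)" if "i < n" "j < n" for i j
    using that by blast
  obtain c where c: "det M = q * c"
    using qdet by blast
  define A' where "A' = mat n n (\<lambda>(i, j). adj_mat M $$ (i, j) div q)"
  have "adj_mat M = q \<cdot>\<^sub>m A'"
    by (rule eq_matI) (use adj_mat(1)[OF M] adj_dvd in \<open>auto simp: A'_def\<close>)
  then have eq: "q \<cdot>\<^sub>m (M * A') = (q * c) \<cdot>\<^sub>m 1\<^sub>m n"
    using adj_mat(2)[OF M] c mult_smult_distrib[OF M, of A' n q] by (simp add: A'_def)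
  have "M * A' = c \<cdot>\<^sub>m 1\<^sub>m n"
  proof (rule eq_matI)
    fix i j assume ij: "i < dim_row (c \<cdot>\<^sub>m 1\<^sub>m n)" "j < dim_col (c \<cdot>\<^sub>m (1\<^sub>m n :: int mat))"
    show "(M * A') $$ (i, j) = (c \<cdot>\<^sub>m 1\<^sub>m n) $$ (i, j)"
      using arg_cong[OF eq, of "\<lambda>B. B $$ (i, j)"] ij M q by (simp add: A'_def prime_gt_0_int less_not_refl2)
  qed (use M in \<open>simp_all add: A'_def\<close>)
  then have "det M * det A' = c ^ n"
    using det_mult[OF M, of A'] by (simp add: A'_def)
  then have "q dvd c"
    using qdet q by (metis dvd_mult2 prime_dvd_power)
  then show False
    using ndet c by (auto simp: power2_eq_square)
qed

lemma right_kernel_vector_exists: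
  fixes M :: "int mat" and q :: int
  assumes M: "M \<in> carrier_mat n n" and q: "prime q"
    and qdet: "q dvd det M" and ndet: "\<not> q^2 dvd det M"
  shows "\<exists>\<kappa> \<in> carrier_vec n. vec_dvd q (M *\<^sub>v \<kappa>) \<and> \<not> vec_dvd q \<kappa>"
proof -
  have A: "adj_mat M \<in> carrier_mat n n"
    by (rule adj_mat(1)[OF M])
  obtain i j where ij: "i < n" "j < n" and nd: "\<not> q dvd adj_mat M $$ (i, j)"
    using adj_mat_not_dvd[OF M q qdet ndet] by blast
  have "vec_dvd q (M *\<^sub>v col (adj_mat M) j)"
  proof (rule vec_dvdI)
    fix r assume r: "r < dim_vec (M *\<^sub>v col (adj_mat M) j)"
    then have "(M *\<^sub>v col (adj_mat M) j) $ r = (M * adj_mat M) $$ (r, j)"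
      using M A ij by simp
    then show "q dvd (M *\<^sub>v col (adj_mat M) j) $ r"
      using adj_mat(2)[OF M] qdet r ij M by simp
  qed
  moreover have "\<not> vec_dvd q (col (adj_mat M) j)"
    using nd ij A by (auto simp: vec_dvd_def)
  ultimately show ?thesis
    using A by (intro bexI[of _ "col (adj_mat M) j"]) auto
qed

section \<open>Skew-symmetric matrices and walk matrices\<close>

lemma pow_mat_Suc_left:
  fixes A :: "'a :: semiring_1 mat"
  assumes A: "A \<in> carrier_mat n n"
  shows "A ^\<^sub>m Suc k = A * A ^\<^sub>m k"
proof (induction k)
  case (Suc k)
  have "A ^\<^sub>m Suc (Suc k) = (A * A ^\<^sub>m k) * A"
    using Suc by simp
  also have "\<dots> = A * (A ^\<^sub>m k * A)"
    using A by (intro assoc_mult_mat) auto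
  finally show ?case
    by simp
qed (use A in simp)

lemma skew_scalar_prod:
  fixes S :: "'a :: comm_ring mat"
  assumes S: "S \<in> carrier_mat n n" and skew: "transpose_mat S = - S"
    and x: "x \<in> carrier_vec n" and y: "y \<in> carrier_vec n"
  shows "(S *\<^sub>v x) \<bullet> y = - (x \<bullet> (S *\<^sub>v y))"
proof -
  have "(S *\<^sub>v x) \<bullet> y = y \<bullet> (S *\<^sub>v x)"
    using S x y by (simp add: comm_scalar_prod[of _ n])
  also have "\<dots> = (transpose_mat S *\<^sub>v y) \<bullet> x"
    using S x y by (simp add: transpose_vec_mult_scalar[of S n n])
  also have "\<dots> = - ((S *\<^sub>v y) \<bullet> x)"
    using S x y by (simp add: skew scalar_prod_uminus_left)
  also have "\<dots> = - (x \<bullet> (S *\<^sub>v y))"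
    using S x y by (simp add: comm_scalar_prod[of _ n])
  finally show ?thesis .
qed

lemma skew_scalar_prod_self:
  fixes S :: "int mat"
  assumes "S \<in> carrier_mat n n" and "transpose_mat S = - S" and "x \<in> carrier_vec n"
  shows "(S *\<^sub>v x) \<bullet> x = 0"
  using skew_scalar_prod[OF assms assms(3)] comm_scalar_prod[of x n "S *\<^sub>v x"] assms by simp

lemma skew_adj_carrier [simp]: "skew_adj n Arc \<in> carrier_mat n n"
  by (simp add: skew_adj_def)

lemma skew_adj_converse_graph: "skew_adj n (converse_graph Arc) = transpose_mat (skew_adj n Arc)"
  by (rule eq_matI) (auto simp: skew_adj_def converse_graph_def)

lemma transpose_skew_adj:
  assumes "oriented_graph n Arc"
  shows "transpose_mat (skew_adj n Arc) = - skew_adj n Arc"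
  by (rule eq_matI) (use assms in \<open>auto simp: skew_adj_def oriented_graph_def\<close>)

lemma all_ones_carrier [simp]: "all_ones n \<in> carrier_vec n"
  by (simp add: all_ones_def)

definition walk_vec :: "nat \<Rightarrow> 'a :: semiring_1 mat \<Rightarrow> nat \<Rightarrow> 'a vec" where
  "walk_vec n S k = (S ^\<^sub>m k) *\<^sub>v all_ones n"

lemma walk_vec_carrier [simp]: "S \<in> carrier_mat n n \<Longrightarrow> walk_vec n S k \<in> carrier_vec n"
  by (rule carrier_vecI) (simp add: walk_vec_def)

lemma dim_walk_vec [simp]: "S \<in> carrier_mat n n \<Longrightarrow> dim_vec (walk_vec n S k) = n"
  by (simp add: walk_vec_def)

lemma walk_vec_0: "S \<in> carrier_mat n n \<Longrightarrow> walk_vec n S 0 = all_ones n"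
  by (simp add: walk_vec_def all_ones_def)

lemma walk_vec_Suc:
  assumes "S \<in> carrier_mat n n"
  shows "walk_vec n S (Suc k) = S *\<^sub>v walk_vec n S k"
  unfolding walk_vec_def pow_mat_Suc_left[OF assms]
  using assms by (simp add: all_ones_def assoc_mult_mat_vec[of _ n n _ n])

lemma of_int_walk_vec:
  assumes "S \<in> carrier_mat n n"
  shows "map_vec of_int (walk_vec n S k) = walk_vec n (map_mat of_int S) k"
proof -
  have "map_vec of_int (walk_vec n S k) = map_mat of_int (S ^\<^sub>m k) *\<^sub>v map_vec of_int (all_ones n)"
    unfolding walk_vec_def by (rule of_int_hom.mult_mat_vec_hom) (use assms in \<open>auto simp: all_ones_def\<close>)
  also have "map_vec of_int (all_ones n :: int vec) = all_ones n"
    by (rule eq_vecI) (auto simp: all_ones_def)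
  also have "map_mat of_int (S ^\<^sub>m k) = map_mat of_int S ^\<^sub>m k"
    by (rule of_int_hom.mat_hom_pow[OF assms])
  finally show ?thesis
    unfolding walk_vec_def .
qed

lemma walk_matrix_carrier [simp]: "walk_matrix n S \<in> carrier_mat n n"
  by (simp add: walk_matrix_def)

lemma dim_walk_matrix [simp]: "dim_row (walk_matrix n S) = n" "dim_col (walk_matrix n S) = n"
  by (simp_all add: walk_matrix_def)

lemma walk_matrix_index: "i < n \<Longrightarrow> k < n \<Longrightarrow> walk_matrix n S $$ (i, k) = walk_vec n S k $ i"
  by (simp add: walk_matrix_def walk_vec_def)

lemma transpose_walk_matrix_mult_vec:
  assumes "S \<in> carrier_mat n n" and "v \<in> carrier_vec n" and "k < n"
  shows "(transpose_mat (walk_matrix n S) *\<^sub>v v) $ k = walk_vec n S k \<bullet> v"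
  using assms by (simp add: walk_matrix_def walk_vec_def scalar_prod_def all_ones_def)

definition shift_vec :: "'a :: zero vec \<Rightarrow> 'a vec" where
  "shift_vec v = vec (dim_vec v) (\<lambda>i. if i = 0 then 0 else v $ (i - 1))"

lemma shift_vec_carrier [simp]: "v \<in> carrier_vec n \<Longrightarrow> shift_vec v \<in> carrier_vec n"
  by (simp add: shift_vec_def)

lemma index_shift_vec: "i < dim_vec v \<Longrightarrow> shift_vec v $ i = (if i = 0 then 0 else v $ (i - 1))"
  by (simp add: shift_vec_def)

lemma walk_matrix_mult_vec_index:
  assumes "S \<in> carrier_mat n n" and "w \<in> carrier_vec n" and "r < n"
  shows "(walk_matrix n S *\<^sub>v w) $ r = (\<Sum>k<n. walk_vec n S k $ r * w $ k)"
  using assms by (simp add: walk_matrix_def walk_vec_def scalar_prod_def atLeast0LessThan)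

lemma mult_walk_matrix:
  fixes S :: "int mat"
  assumes S: "S \<in> carrier_mat n n"
  shows "S * walk_matrix n S = mat n n (\<lambda>(r, k). walk_vec n S (Suc k) $ r)"
proof (rule eq_matI)
  fix r k assume rk: "r < dim_row (mat n n (\<lambda>(r, k). walk_vec n S (Suc k) $ r))"
    "k < dim_col (mat n n (\<lambda>(r, k). walk_vec n S (Suc k) $ r))"
  have "col (walk_matrix n S) k = walk_vec n S k"
    using S rk by (intro eq_vecI) (auto simp: walk_matrix_def walk_vec_def)
  then show "(S * walk_matrix n S) $$ (r, k) = mat n n (\<lambda>(r, k). walk_vec n S (Suc k) $ r) $$ (r, k)"
    using S rk by (simp add: walk_vec_Suc)
next
  show "dim_row (S * walk_matrix n S) = dim_row (mat n n (\<lambda>(r, k). walk_vec n S (Suc k) $ r))"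
    using S by simp
next
  show "dim_col (S * walk_matrix n S) = dim_col (mat n n (\<lambda>(r, k). walk_vec n S (Suc k) $ r))"
    by simp
qed

text \<open>Column \<open>k\<close> of \<open>S W\<close> is column \<open>k + 1\<close> of \<open>W\<close>, so \<open>S\<close> acts on the coordinates of \<open>W\<close>
  as a shift, up to the column \<open>S\<^sup>n e\<close> that falls out of \<open>W\<close>.\<close>

lemma walk_matrix_mult_shift_vec:
  fixes S :: "int mat"
  assumes S: "S \<in> carrier_mat n n" and v: "v \<in> carrier_vec n" and n: "0 < n"
  shows "walk_matrix n S *\<^sub>v shift_vec v
    = S *\<^sub>v (walk_matrix n S *\<^sub>v v) - v $ (n - 1) \<cdot>\<^sub>v walk_vec n S n"
proof (rule eq_vecI)
  define E where "E = walk_vec n S"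
  obtain m where m: "n = Suc m"
    using n by (cases n) auto
  fix r assume "r < dim_vec (S *\<^sub>v (walk_matrix n S *\<^sub>v v) - v $ (n - 1) \<cdot>\<^sub>v walk_vec n S n)"
  then have r: "r < n"
    using S by simp
  have sh: "shift_vec v $ 0 = 0" "\<And>k. k < m \<Longrightarrow> shift_vec v $ Suc k = v $ k"
    using v m by (auto simp: index_shift_vec)
  have "(walk_matrix n S *\<^sub>v shift_vec v) $ r = (\<Sum>k<Suc m. E k $ r * shift_vec v $ k)"
    using walk_matrix_mult_vec_index[OF S shift_vec_carrier[OF v] r] m by (simp add: E_def)
  also have "\<dots> = (\<Sum>k<m. E (Suc k) $ r * v $ k)"
    unfolding sum.lessThan_Suc_shift using sh by (auto intro!: sum.cong)
  also have "\<dots> = (\<Sum>k<Suc m. E (Suc k) $ r * v $ k) - E n $ r * v $ (n - 1)"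
    using m by simp
  also have "(\<Sum>k<Suc m. E (Suc k) $ r * v $ k) = ((S * walk_matrix n S) *\<^sub>v v) $ r"
    using S v r m by (simp add: mult_walk_matrix scalar_prod_def atLeast0LessThan E_def)
  also have "\<dots> = (S *\<^sub>v (walk_matrix n S *\<^sub>v v)) $ r"
    using assoc_mult_mat_vec[OF S walk_matrix_carrier v] by simp
  also have "(S *\<^sub>v (walk_matrix n S *\<^sub>v v)) $ r - E n $ r * v $ (n - 1)
      = (S *\<^sub>v (walk_matrix n S *\<^sub>v v) - v $ (n - 1) \<cdot>\<^sub>v walk_vec n S n) $ r"
    using S r by (simp add: E_def)
  finally show "(walk_matrix n S *\<^sub>v shift_vec v) $ r
    = (S *\<^sub>v (walk_matrix n S *\<^sub>v v) - v $ (n - 1) \<cdot>\<^sub>v walk_vec n S n) $ r" .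
qed (use S in simp)

section \<open>The integral symmetry\<close>

lemma anticommuting_mult_walk_vec:
  fixes P R :: "'a :: field mat"
  assumes P: "P \<in> carrier_mat n n" and R: "R \<in> carrier_mat n n"
    and PR: "P * R = - (R * P)" and Pe: "P *\<^sub>v all_ones n = all_ones n"
  shows "P *\<^sub>v walk_vec n R k = (-1)^k \<cdot>\<^sub>v walk_vec n R k"
proof (induction k)
  case 0
  show ?case
    using R Pe by (simp add: walk_vec_0)
next
  case (Suc k)
  let ?w = "walk_vec n R k"
  have "P *\<^sub>v walk_vec n R (Suc k) = (P * R) *\<^sub>v ?w"
    using P R by (simp add: walk_vec_Suc assoc_mult_mat_vec[of _ n n _ n])
  also have "\<dots> = - (R *\<^sub>v (P *\<^sub>v ?w))"
    using P R by (simp add: PR assoc_mult_mat_vec[of _ n n _ n])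
  also have "\<dots> = - ((-1)^k \<cdot>\<^sub>v (R *\<^sub>v ?w))"
    using R by (simp add: Suc mult_mat_vec[of _ n n])
  also have "\<dots> = (-1)^Suc k \<cdot>\<^sub>v walk_vec n R (Suc k)"
    using R by (intro eq_vecI) (auto simp: walk_vec_Suc)
  finally show ?case .
qed

lemma regular_orthogonal_anticommutes:
  fixes Q R :: "rat mat"
  assumes Q: "regular_rat_orthogonal n Q" and R: "R \<in> carrier_mat n n"
    and conj: "transpose_mat Q * R * Q = - R"
  shows "Q * R = - (R * Q)" and "transpose_mat Q * R = - (R * transpose_mat Q)"
    and "transpose_mat Q *\<^sub>v all_ones n = all_ones n"
proof -
  have Qc: "Q \<in> carrier_mat n n" and QTc: "transpose_mat Q \<in> carrier_mat n n"
    and QTQ: "transpose_mat Q * Q = 1\<^sub>m n" and Qe: "Q *\<^sub>v all_ones n = all_ones n"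
    using Q by (auto simp: regular_rat_orthogonal_def)
  have QQT: "Q * transpose_mat Q = 1\<^sub>m n"
    by (rule mat_mult_left_right_inverse[OF QTc Qc QTQ])
  have "R * Q = (Q * transpose_mat Q) * R * Q"
    using R by (simp add: QQT)
  also have "\<dots> = Q * (transpose_mat Q * R * Q)"
    using Qc QTc R by (simp add: assoc_mult_mat[of _ n n _ n _ n])
  finally show QR: "Q * R = - (R * Q)"
    using Qc R by (simp add: conj)
  have "transpose_mat Q * R = (transpose_mat Q * R * Q) * transpose_mat Q"
    using Qc QTc R by (simp add: assoc_mult_mat[of _ n n _ n _ n] QQT)
  then show "transpose_mat Q * R = - (R * transpose_mat Q)"
    using R QTc by (simp add: conj)
  have "(transpose_mat Q * Q) *\<^sub>v all_ones n = transpose_mat Q *\<^sub>v (Q *\<^sub>v all_ones n)"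
    using Qc QTc by (simp add: assoc_mult_mat_vec[of _ n n _ n])
  then show "transpose_mat Q *\<^sub>v all_ones n = all_ones n"
    by (simp add: QTQ Qe)
qed

lemma mult_right_eq_imp_one:
  fixes A B :: "'a :: field mat"
  assumes A: "A \<in> carrier_mat n n" and B: "B \<in> carrier_mat n n"
    and det: "det B \<noteq> 0" and AB: "A * B = B"
  shows "A = 1\<^sub>m n"
proof -
  obtain B' where B': "B' \<in> carrier_mat n n" and BB': "B * B' = 1\<^sub>m n"
    using det_non_zero_imp_unit[OF B det] by (auto simp: Units_def ring_mat_def)
  have "A = A * (B * B')"
    using A by (simp add: BB')
  also have "\<dots> = B * B'"
    using A B B' by (simp add: assoc_mult_mat[of _ n n _ n _ n, symmetric] AB)
  finally show ?thesis
    by (simp add: BB')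
qed

text \<open>\<open>Q\<close> multiplies the column \<open>S\<^sup>k e\<close> of \<open>W\<close> by \<open>(-1)\<^sup>k\<close>, so \<open>Q\<^sup>2\<close> fixes the invertible
  matrix \<open>W\<close>.\<close>

lemma regular_orthogonal_involution:
  fixes Q :: "rat mat" and S :: "int mat"
  assumes Q: "regular_rat_orthogonal n Q" and S: "S \<in> carrier_mat n n"
    and conj: "transpose_mat Q * map_mat of_int S * Q = - map_mat of_int S"
    and det: "det (walk_matrix n S) \<noteq> 0"
  shows "Q * Q = 1\<^sub>m n"
proof -
  define R where "R = map_mat (of_int :: int \<Rightarrow> rat) S"
  define WR where "WR = map_mat (of_int :: int \<Rightarrow> rat) (walk_matrix n S)"
  have Qc: "Q \<in> carrier_mat n n" and Qe: "Q *\<^sub>v all_ones n = all_ones n"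
    using Q by (auto simp: regular_rat_orthogonal_def)
  have R: "R \<in> carrier_mat n n"
    using S by (simp add: R_def)
  have WR: "WR \<in> carrier_mat n n"
    by (simp add: WR_def)
  have sign: "(-1::rat)^k * (-1)^k = 1" for k
    by (simp flip: power_mult_distrib)
  have QQ_walk: "Q *\<^sub>v (Q *\<^sub>v walk_vec n R k) = walk_vec n R k" for k
    using anticommuting_mult_walk_vec[OF Qc R regular_orthogonal_anticommutes(1)[OF Q R conj[folded R_def]] Qe]
      Qc R by (simp add: mult_mat_vec[of _ n n] smult_smult_assoc sign)
  have "(Q * Q) * WR = WR"
  proof (rule mat_col_eqI)
    fix k assume k: "k < dim_col WR"
    have col: "col WR k = walk_vec n R k"
      using k S by (intro eq_vecI) (auto simp: WR_def R_def walk_matrix_index of_int_walk_vec[symmetric])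
    have "col ((Q * Q) * WR) k = (Q * Q) *\<^sub>v walk_vec n R k"
      using col_mult2[of "Q * Q" n n WR n k] k Qc WR by (simp add: col)
    also have "\<dots> = walk_vec n R k"
      using Qc R by (simp add: QQ_walk assoc_mult_mat_vec[of _ n n _ n])
    finally show "col ((Q * Q) * WR) k = col WR k"
      by (simp add: col)
  qed (use Qc WR in auto)
  moreover have "det WR \<noteq> 0"
    using det by (simp add: WR_def of_int_hom.hom_det)
  ultimately show ?thesis
    using Qc WR by (intro mult_right_eq_imp_one[of _ n WR]) auto
qed

lemma common_denominator_mat:
  fixes Q :: "rat mat"
  shows "\<exists>d :: nat. 0 < d \<and> (\<forall>i<n. \<forall>j<n. of_nat d * Q $$ (i, j) \<in> \<int>)"
proof -
  define den where "den x = nat (snd (quotient_of x))" for x :: rat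
  have den_pos: "0 < den x" for x
    using quotient_of_denom_pos' by (simp add: den_def)
  have den_int: "of_nat (den x) * x \<in> \<int>" for x
  proof -
    obtain a b where ab: "quotient_of x = (a, b)"
      by (cases "quotient_of x")
    then have "of_nat (den x) * x = of_int a"
      using quotient_of_denom_pos[OF ab] quotient_of_div[OF ab] by (simp add: den_def)
    then show ?thesis
      by simp
  qed
  define d where "d = (\<Prod>ij\<in>{0..<n} \<times> {0..<n}. den (Q $$ ij))"
  have "of_nat d * Q $$ (i, j) \<in> \<int>" if "i < n" "j < n" for i j
  proof -
    have "den (Q $$ (i, j)) dvd d"
      unfolding d_def by (rule dvd_prodI) (use that in auto)
    then obtain c where "d = den (Q $$ (i, j)) * c"
      by blast
    then have "of_nat d * Q $$ (i, j) = of_nat c * (of_nat (den (Q $$ (i, j))) * Q $$ (i, j))"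
      by (simp add: ac_simps)
    also have "\<dots> \<in> \<int>"
      by (intro Ints_mult Ints_of_nat den_int)
    finally show ?thesis .
  qed
  moreover have "0 < d"
    unfolding d_def using den_pos by (intro prod_pos) auto
  ultimately show ?thesis
    by blast
qed

lemma integral_multiple_by_level:
  fixes Q :: "rat mat"
  assumes Q: "Q \<in> carrier_mat n n"
  shows "\<exists>X \<in> carrier_mat n n. map_mat of_int X = of_nat (level Q) \<cdot>\<^sub>m Q"
proof -
  have "0 < level Q \<and> (\<forall>i<dim_row Q. \<forall>j<dim_col Q. of_nat (level Q) * Q $$ (i, j) \<in> \<int>)"
    unfolding level_def by (rule LeastI_ex) (use common_denominator_mat[of n Q] Q in auto)
  then have int: "\<And>i j. i < n \<Longrightarrow> j < n \<Longrightarrow> of_nat (level Q) * Q $$ (i, j) \<in> \<int>"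
    using Q by auto
  define X where "X = mat n n (\<lambda>(i, j). \<lfloor>of_nat (level Q) * Q $$ (i, j)\<rfloor>)"
  have "map_mat of_int X = of_nat (level Q) \<cdot>\<^sub>m Q"
    by (rule eq_matI) (use Q int in \<open>auto simp: X_def\<close>)
  then show ?thesis
    by (intro bexI[of _ X]) (auto simp: X_def)
qed

lemma scaled_integral_square:
  fixes Q :: "rat mat" and X :: "int mat"
  assumes Q: "Q \<in> carrier_mat n n" and X: "X \<in> carrier_mat n n"
    and XQ: "map_mat of_int X = of_int l \<cdot>\<^sub>m Q" and QQ: "Q * Q = 1\<^sub>m n"
  shows "X * X = l^2 \<cdot>\<^sub>m 1\<^sub>m n"
proof (rule of_int_hom.mat_hom_inj)
  have "map_mat of_int (X * X) = (of_int l \<cdot>\<^sub>m Q) * (of_int l \<cdot>\<^sub>m Q)"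
    using X by (simp add: of_int_hom.mat_hom_mult[of _ n n] XQ)
  also have "\<dots> = of_int l \<cdot>\<^sub>m (of_int l \<cdot>\<^sub>m (Q * Q))"
    using Q by (simp add: mult_smult_assoc_mat[of _ n n] mult_smult_distrib[of _ n n])
  also have "\<dots> = map_mat of_int (l^2 \<cdot>\<^sub>m 1\<^sub>m n)"
    unfolding QQ by (rule eq_matI) (auto simp: power2_eq_square)
  finally show "map_mat (of_int :: int \<Rightarrow> rat) (X * X) = map_mat of_int (l^2 \<cdot>\<^sub>m 1\<^sub>m n)" .
qed

lemma scaled_integral_anticommutes:
  fixes Q :: "rat mat" and X S :: "int mat"
  assumes Q: "Q \<in> carrier_mat n n" and X: "X \<in> carrier_mat n n" and S: "S \<in> carrier_mat n n"
    and XQ: "map_mat of_int X = of_int l \<cdot>\<^sub>m Q"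
    and QS: "Q * map_mat of_int S = - (map_mat of_int S * Q)"
  shows "X * S = - (S * X)"
proof (rule of_int_hom.mat_hom_inj)
  have "map_mat of_int (X * S) = of_int l \<cdot>\<^sub>m (Q * map_mat of_int S)"
    using X S Q by (simp add: of_int_hom.mat_hom_mult[of _ n n] XQ mult_smult_assoc_mat[of _ n n])
  also have "\<dots> = - (of_int l \<cdot>\<^sub>m (map_mat of_int S * Q))"
    using Q S by (intro eq_matI) (auto simp: QS)
  also have "of_int l \<cdot>\<^sub>m (map_mat of_int S * Q) = map_mat of_int (S * X)"
    using X S Q by (simp add: of_int_hom.mat_hom_mult[of _ n n] XQ mult_smult_distrib[of _ n n])
  also have "- map_mat of_int (S * X) = map_mat of_int (- (S * X))"
    by (rule eq_matI) auto
  finally show "map_mat (of_int :: int \<Rightarrow> rat) (X * S) = map_mat of_int (- (S * X))" .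
qed

lemma scaled_integral_transpose_walk_vec:
  fixes Q :: "rat mat" and X S :: "int mat"
  assumes Q: "Q \<in> carrier_mat n n" and X: "X \<in> carrier_mat n n" and S: "S \<in> carrier_mat n n"
    and XQ: "map_mat of_int X = of_int l \<cdot>\<^sub>m Q"
    and QT: "transpose_mat Q *\<^sub>v walk_vec n (map_mat of_int S) k
      = (-1)^k \<cdot>\<^sub>v walk_vec n (map_mat of_int S) k"
  shows "transpose_mat X *\<^sub>v walk_vec n S k = (l * (-1)^k) \<cdot>\<^sub>v walk_vec n S k"
proof (rule of_int_hom.vec_hom_inj)
  have "map_vec of_int (transpose_mat X *\<^sub>v walk_vec n S k)
      = map_mat of_int (transpose_mat X) *\<^sub>v walk_vec n (map_mat of_int S) k"
    using X S by (simp add: of_int_hom.mult_mat_vec_hom[of _ n n] of_int_walk_vec)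
  also have "map_mat of_int (transpose_mat X) = of_int l \<cdot>\<^sub>m transpose_mat Q"
    using Q by (simp flip: map_mat_transpose add: XQ) (rule eq_matI; auto)
  also have "(of_int l \<cdot>\<^sub>m transpose_mat Q) *\<^sub>v walk_vec n (map_mat of_int S) k
      = of_int l \<cdot>\<^sub>v (transpose_mat Q *\<^sub>v walk_vec n (map_mat of_int S) k)"
    using Q S by (intro eq_vecI) auto
  also have "\<dots> = of_int l \<cdot>\<^sub>v ((-1)^k \<cdot>\<^sub>v walk_vec n (map_mat of_int S) k)"
    by (simp only: QT)
  also have "\<dots> = map_vec of_int ((l * (-1)^k) \<cdot>\<^sub>v walk_vec n S k)"
    using S by (intro eq_vecI) (auto simp: of_int_walk_vec[symmetric])
  finally show "map_vec (of_int :: int \<Rightarrow> rat) (transpose_mat X *\<^sub>v walk_vec n S k)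
      = map_vec of_int ((l * (-1)^k) \<cdot>\<^sub>v walk_vec n S k)" .
qed

lemma integral_symmetry:
  fixes Q :: "rat mat" and S :: "int mat"
  assumes Q: "regular_rat_orthogonal n Q" and S: "S \<in> carrier_mat n n"
    and conj: "transpose_mat Q * map_mat of_int S * Q = - map_mat of_int S"
    and det: "det (walk_matrix n S) \<noteq> 0"
  obtains X where "X \<in> carrier_mat n n" and "X * X = (int (level Q))^2 \<cdot>\<^sub>m 1\<^sub>m n"
    and "X * S = - (S * X)"
    and "\<And>k. transpose_mat X *\<^sub>v walk_vec n S k = (int (level Q) * (-1)^k) \<cdot>\<^sub>v walk_vec n S k"
proof -
  have Qc: "Q \<in> carrier_mat n n"
    using Q by (simp add: regular_rat_orthogonal_def)
  have R: "map_mat of_int S \<in> carrier_mat n n"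
    using S by simp
  obtain X where X: "X \<in> carrier_mat n n" and XQ: "map_mat of_int X = of_int (int (level Q)) \<cdot>\<^sub>m Q"
    using integral_multiple_by_level[OF Qc] by auto
  note anti = regular_orthogonal_anticommutes[OF Q R conj]
  show ?thesis
    using that[OF X] scaled_integral_square[OF Qc X XQ regular_orthogonal_involution[OF Q S conj det]]
      scaled_integral_anticommutes[OF Qc X S XQ anti(1)]
      scaled_integral_transpose_walk_vec[OF Qc X S XQ anticommuting_mult_walk_vec[OF _ R anti(2,3)]] Qc
    by simp
qed

section \<open>The argument modulo a prime\<close>

lemma vec_dvd_scalar_prod_sq:
  fixes u v :: "int vec"
  assumes "vec_dvd q u" and "vec_dvd q v" and "dim_vec v = dim_vec u"
  shows "q^2 dvd u \<bullet> v"
  unfolding scalar_prod_def power2_eq_square using assms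
  by (intro dvd_sum) (auto simp: vec_dvd_def mult_dvd_mono)

lemma vec_dvd_if_shift_vec_dvd:
  assumes "vec_dvd q (shift_vec v)" and "v $ (dim_vec v - 1) = 0"
  shows "vec_dvd q v"
proof (rule vec_dvdI)
  fix i assume i: "i < dim_vec v"
  show "q dvd v $ i"
  proof (cases "i = dim_vec v - 1")
    case False
    then have "Suc i < dim_vec v"
      using i by simp
    then have "q dvd shift_vec v $ Suc i"
      by (intro vec_dvdD[OF assms(1)]) (simp add: shift_vec_def)
    then show ?thesis
      using \<open>Suc i < dim_vec v\<close> by (simp add: shift_vec_def)
  qed (use assms(2) in simp)
qed

text \<open>Eigenvectors of \<open>X\<close> for the eigenvalues \<open>c\<close> and \<open>-c\<close> cannot both survive in a
  one-dimensional kernel modulo an odd prime: if \<open>b = \<lambda> a\<close>, then \<open>X b\<close> is both \<open>c b\<close> and \<open>-c b\<close>.\<close>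

lemma opposite_eigenvector_dvd:
  fixes M X :: "int mat" and q c :: int
  assumes M: "M \<in> carrier_mat n n" and X: "X \<in> carrier_mat n n"
    and a: "a \<in> carrier_vec n" and b: "b \<in> carrier_vec n"
    and q: "prime q" and ndet: "\<not> q^2 dvd det M"
    and Ma: "vec_dvd q (M *\<^sub>v a)" and Mb: "vec_dvd q (M *\<^sub>v b)"
    and Xa: "vec_dvd q (X *\<^sub>v a - c \<cdot>\<^sub>v a)" and Xb: "vec_dvd q (X *\<^sub>v b + c \<cdot>\<^sub>v b)"
    and c: "\<not> q dvd 2 * c" and a_nz: "\<not> vec_dvd q a"
  shows "vec_dvd q b"
proof (rule vec_dvdI)
  obtain k where k: "k < n" "\<not> q dvd a $ k"
    using a_nz a by (auto simp: vec_dvd_def)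
  define v where "v = a $ k \<cdot>\<^sub>v b - b $ k \<cdot>\<^sub>v a"
  have v: "vec_dvd q v"
    unfolding v_def by (rule right_kernel_proportional[OF M a b q ndet Ma Mb k(1)])
  have Xv: "vec_dvd q (X *\<^sub>v v)"
    using v X a by (intro vec_dvd_mult_mat_vec) (auto simp: v_def)
  fix i assume "i < dim_vec b"
  then have i: "i < n"
    using b by simp
  have "2 * c * a $ k * b $ i
      = a $ k * (X *\<^sub>v b + c \<cdot>\<^sub>v b) $ i - b $ k * (X *\<^sub>v a - c \<cdot>\<^sub>v a) $ i
        - (X *\<^sub>v v) $ i + c * v $ i"
    using mult_mat_vec_lincomb[OF X b a, of "a $ k" "b $ k"] X a b i by (simp add: v_def algebra_simps)
  also have "q dvd \<dots>"
    using Xa Xb Xv v X a b i by (intro dvd_add dvd_diff dvd_mult) (auto simp: vec_dvd_def v_def)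
  finally show "q dvd b $ i"
    using q c k(2) by (simp add: prime_dvd_mult_iff)
qed

locale walk_mod_prime =
  fixes n :: nat and S :: "int mat" and q :: int
  assumes S_carrier: "S \<in> carrier_mat n n"
    and S_skew: "transpose_mat S = - S"
    and q_prime: "prime q"
    and det_not_sq_dvd: "\<not> q^2 dvd det (walk_matrix n S)"
begin

abbreviation W :: "int mat" where
  "W \<equiv> walk_matrix n S"

lemma mult_vec_carrier [simp]:
  assumes "v \<in> carrier_vec n"
  shows "W *\<^sub>v v \<in> carrier_vec n" and "S *\<^sub>v v \<in> carrier_vec n"
  using mult_mat_vec_carrier[OF walk_matrix_carrier assms] mult_mat_vec_carrier[OF S_carrier assms]
  by auto

lemma dvd_det_if_left_kernel:
  assumes z: "z \<in> carrier_vec n" and Wz: "vec_dvd q (transpose_mat W *\<^sub>v z)"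
    and z_nz: "\<not> vec_dvd q z"
  shows "q dvd det W"
proof -
  obtain i where "i < n" "\<not> q dvd z $ i"
    using z z_nz by (auto simp: vec_dvd_def)
  then have "q dvd det (transpose_mat W)"
    using dvd_det_if_right_kernel[of "transpose_mat W" n z q i] z Wz q_prime by simp
  then show ?thesis
    by (simp add: det_transpose[OF walk_matrix_carrier])
qed

text \<open>If every right kernel vector modulo \<open>q\<close> had last entry \<open>\<equiv> 0\<close>, shifting it would give
  another kernel vector, not proportional to it.\<close>

lemma right_kernel_vector_last_entry:
  assumes qdet: "q dvd det W"
  obtains \<kappa> where "\<kappa> \<in> carrier_vec n" and "vec_dvd q (W *\<^sub>v \<kappa>)" and "\<not> q dvd \<kappa> $ (n - 1)"
    and "0 < n"
proof -
  obtain \<kappa> where \<kappa>: "\<kappa> \<in> carrier_vec n" and W\<kappa>: "vec_dvd q (W *\<^sub>v \<kappa>)" and \<kappa>_nz: "\<not> vec_dvd q \<kappa>"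
    using right_kernel_vector_exists[OF walk_matrix_carrier q_prime qdet det_not_sq_dvd] by blast
  have "0 < n"
    using \<kappa> \<kappa>_nz by (auto simp: vec_dvd_def)
  show ?thesis
  proof (cases "q dvd \<kappa> $ (n - 1)")
    case True
    define D where "D = {i. i < n \<and> \<not> q dvd \<kappa> $ i}"
    define d where "d = Max D"
    have "D \<noteq> {}" and "finite D"
      using \<kappa> \<kappa>_nz by (auto simp: D_def vec_dvd_def)
    then have d: "d < n" "\<not> q dvd \<kappa> $ d" and above: "\<And>i. d < i \<Longrightarrow> i < n \<Longrightarrow> q dvd \<kappa> $ i"
      using Max_in[of D] Max_ge[of D] by (auto simp: d_def D_def)
    have d1: "d + 1 < n"
      using d True by (cases "d = n - 1") auto
    have "vec_dvd q (W *\<^sub>v shift_vec \<kappa>)"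
    proof -
      have "vec_dvd q (S *\<^sub>v (W *\<^sub>v \<kappa>))"
        using S_carrier by (intro vec_dvd_mult_mat_vec[OF W\<kappa>]) simp
      then show ?thesis
        using walk_matrix_mult_shift_vec[OF S_carrier \<kappa>] d1 True S_carrier
        by (simp add: vec_dvd_def)
    qed
    then have "q dvd \<kappa> $ d * shift_vec \<kappa> $ (d + 1) - \<kappa> $ (d + 1) * shift_vec \<kappa> $ d"
      using right_kernel_minor_dvd[OF walk_matrix_carrier \<kappa> _ q_prime det_not_sq_dvd W\<kappa>] \<kappa> d d1
      by simp
    moreover have "shift_vec \<kappa> $ (d + 1) = \<kappa> $ d"
      using \<kappa> d1 by (simp add: shift_vec_def)
    moreover have "q dvd \<kappa> $ (d + 1)"
      using above d1 by simp
    ultimately have "q dvd \<kappa> $ d * \<kappa> $ d"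
      by (metis dvd_mult2 diff_add_cancel dvd_add)
    then show ?thesis
      using d q_prime by (simp add: prime_dvd_mult_iff)
  qed (use \<kappa> W\<kappa> \<open>0 < n\<close> that in blast)
qed

lemma transpose_walk_matrix_mult_skew:
  assumes z: "z \<in> carrier_vec n" and k: "k < n"
  shows "(transpose_mat W *\<^sub>v (S *\<^sub>v z)) $ k = - (walk_vec n S (Suc k) \<bullet> z)"
  using transpose_walk_matrix_mult_vec[OF S_carrier _ k, of "S *\<^sub>v z"]
    skew_scalar_prod[OF S_carrier S_skew walk_vec_carrier[OF S_carrier] z, of k] z S_carrier
  by (simp add: walk_vec_Suc[OF S_carrier])

text \<open>In the pairing of \<open>z\<close> with \<open>S W \<kappa> \<equiv> 0\<close>, every \<open>S\<^sup>k e \<bullet> z\<close> with \<open>k < n\<close> drops out;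
  the remaining one, \<open>S\<^sup>n e \<bullet> z\<close>, comes with the factor \<open>\<kappa>\<^sub>n\<^sub>-\<^sub>1 \<not>\<equiv> 0\<close>.\<close>

lemma left_kernel_walk_vec_last:
  assumes z: "z \<in> carrier_vec n" and Wz: "vec_dvd q (transpose_mat W *\<^sub>v z)"
    and z_nz: "\<not> vec_dvd q z"
  shows "q dvd walk_vec n S n \<bullet> z"
proof -
  obtain \<kappa> where \<kappa>: "\<kappa> \<in> carrier_vec n" and W\<kappa>: "vec_dvd q (W *\<^sub>v \<kappa>)"
    and \<kappa>_last: "\<not> q dvd \<kappa> $ (n - 1)" and n: "0 < n"
    using right_kernel_vector_last_entry[OF dvd_det_if_left_kernel[OF z Wz z_nz]] by blast
  obtain m where m: "n = Suc m"
    using n by (cases n) auto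
  define e where "e k = walk_vec n S (Suc k) \<bullet> z" for k
  have "(S *\<^sub>v (W *\<^sub>v \<kappa>)) \<bullet> z = - ((W *\<^sub>v \<kappa>) \<bullet> (S *\<^sub>v z))"
    by (rule skew_scalar_prod[OF S_carrier S_skew mult_mat_vec_carrier[OF walk_matrix_carrier \<kappa>] z])
  also have "(W *\<^sub>v \<kappa>) \<bullet> (S *\<^sub>v z) = (transpose_mat W *\<^sub>v (S *\<^sub>v z)) \<bullet> \<kappa>"
    using transpose_vec_mult_scalar[OF walk_matrix_carrier \<kappa>, of "S *\<^sub>v z"] z \<kappa> S_carrier
    by (simp add: comm_scalar_prod[of _ n])
  also have "\<dots> = (\<Sum>k<n. (transpose_mat W *\<^sub>v (S *\<^sub>v z)) $ k * \<kappa> $ k)"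
    using \<kappa> by (simp only: scalar_prod_def atLeast0LessThan carrier_vecD)
  also have "\<dots> = (\<Sum>k<n. - e k * \<kappa> $ k)"
    by (rule sum.cong[OF refl]) (subst transpose_walk_matrix_mult_skew[OF z], auto simp: e_def)
  finally have "(S *\<^sub>v (W *\<^sub>v \<kappa>)) \<bullet> z = (\<Sum>k<m. e k * \<kappa> $ k) + e m * \<kappa> $ m"
    using m by (simp add: sum_negf)
  moreover have "q dvd (S *\<^sub>v (W *\<^sub>v \<kappa>)) \<bullet> z"
    using S_carrier z by (intro vec_dvd_scalar_prod vec_dvd_mult_mat_vec[OF W\<kappa>]) auto
  moreover have "q dvd (\<Sum>k<m. e k * \<kappa> $ k)"
    using Wz z m S_carrier
    by (intro dvd_sum dvd_mult2) (auto simp: e_def vec_dvd_def transpose_walk_matrix_mult_vec[symmetric])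
  ultimately have "q dvd e m * \<kappa> $ m"
    by (simp add: dvd_add_right_iff)
  then show ?thesis
    using \<kappa>_last m q_prime by (simp add: e_def prime_dvd_mult_iff)
qed

lemma left_kernel_skew:
  assumes z: "z \<in> carrier_vec n" and Wz: "vec_dvd q (transpose_mat W *\<^sub>v z)"
    and z_nz: "\<not> vec_dvd q z"
  shows "vec_dvd q (transpose_mat W *\<^sub>v (S *\<^sub>v z))"
proof (rule vec_dvdI)
  fix k assume "k < dim_vec (transpose_mat W *\<^sub>v (S *\<^sub>v z))"
  then have k: "k < n"
    by simp
  have "q dvd walk_vec n S (Suc k) \<bullet> z"
  proof (cases "Suc k < n")
    case True
    then show ?thesis
      using Wz z S_carrier by (simp add: vec_dvd_def transpose_walk_matrix_mult_vec[symmetric])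
  next
    case False
    then have "Suc k = n"
      using k by simp
    then show ?thesis
      using left_kernel_walk_vec_last[OF z Wz z_nz] by simp
  qed
  then show "q dvd (transpose_mat W *\<^sub>v (S *\<^sub>v z)) $ k"
    by (simp add: transpose_walk_matrix_mult_skew[OF z k])
qed

lemma image_vector_last_entry_zero:
  assumes qdet: "q dvd det W" and z: "z \<in> carrier_vec n" and t: "t \<in> carrier_vec n"
    and Wt: "vec_dvd q (W *\<^sub>v t - c \<cdot>\<^sub>v z)" and c: "\<not> q dvd c"
  obtains t' c' where "t' \<in> carrier_vec n" and "t' $ (n - 1) = 0" and "\<not> q dvd c'"
    and "vec_dvd q (W *\<^sub>v t' - c' \<cdot>\<^sub>v z)"
proof -
  obtain \<kappa> where \<kappa>: "\<kappa> \<in> carrier_vec n" and W\<kappa>: "vec_dvd q (W *\<^sub>v \<kappa>)"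
    and \<kappa>_last: "\<not> q dvd \<kappa> $ (n - 1)" and n: "0 < n"
    using right_kernel_vector_last_entry[OF qdet] by blast
  define t' where "t' = \<kappa> $ (n - 1) \<cdot>\<^sub>v t - t $ (n - 1) \<cdot>\<^sub>v \<kappa>"
  have "W *\<^sub>v t' - (\<kappa> $ (n - 1) * c) \<cdot>\<^sub>v z
      = \<kappa> $ (n - 1) \<cdot>\<^sub>v (W *\<^sub>v t - c \<cdot>\<^sub>v z) - t $ (n - 1) \<cdot>\<^sub>v (W *\<^sub>v \<kappa>)"
    unfolding t'_def mult_mat_vec_lincomb[OF walk_matrix_carrier t \<kappa>]
    by (rule eq_vecI) (use t z \<kappa> in \<open>auto simp: algebra_simps\<close>)
  then have "vec_dvd q (W *\<^sub>v t' - (\<kappa> $ (n - 1) * c) \<cdot>\<^sub>v z)"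
    using Wt W\<kappa> t z \<kappa> by (simp add: vec_dvd_def)
  moreover have "t' $ (n - 1) = 0"
    using t \<kappa> n by (simp add: t'_def)
  moreover have "\<not> q dvd \<kappa> $ (n - 1) * c"
    using \<kappa>_last c q_prime by (simp add: prime_dvd_mult_iff)
  moreover have "t' \<in> carrier_vec n"
    using t \<kappa> by (simp add: t'_def)
  ultimately show ?thesis
    using that by blast
qed

text \<open>With \<open>S z \<equiv> 0\<close>, the shift of a preimage of \<open>c z\<close> is a right kernel vector pairing with \<open>z\<close>
  to \<open>z \<bullet> S W t = -(S z) \<bullet> (W t - c z)\<close>, a multiple of \<open>q\<^sup>2\<close>.\<close>

lemma shift_image_vector:
  assumes z: "z \<in> carrier_vec n" and Sz: "vec_dvd q (S *\<^sub>v z)" and t: "t \<in> carrier_vec n"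
    and n: "0 < n" and t_last: "t $ (n - 1) = 0" and Wt: "vec_dvd q (W *\<^sub>v t - c \<cdot>\<^sub>v z)"
  shows "vec_dvd q (W *\<^sub>v shift_vec t)" and "q^2 dvd z \<bullet> (W *\<^sub>v shift_vec t)"
proof -
  define w where "w = W *\<^sub>v t"
  have w: "w \<in> carrier_vec n"
    using t by (simp add: w_def)
  have shift: "W *\<^sub>v shift_vec t = S *\<^sub>v w"
    using walk_matrix_mult_shift_vec[OF S_carrier t n] t_last S_carrier w
    by (auto simp: w_def)
  have "S *\<^sub>v w = S *\<^sub>v (w - c \<cdot>\<^sub>v z) + c \<cdot>\<^sub>v (S *\<^sub>v z)"
    using S_carrier w z by (intro eq_vecI) (auto simp: scalar_prod_minus_distrib[of _ n] algebra_simps)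
  moreover have "vec_dvd q (S *\<^sub>v (w - c \<cdot>\<^sub>v z))"
    using Wt S_carrier z by (intro vec_dvd_mult_mat_vec) (auto simp: w_def)
  ultimately show "vec_dvd q (W *\<^sub>v shift_vec t)"
    using Sz S_carrier z w by (auto simp: shift vec_dvd_def)
  have "z \<bullet> (W *\<^sub>v shift_vec t) = - ((S *\<^sub>v z) \<bullet> w)"
    using skew_scalar_prod[OF S_carrier S_skew z w] by (simp add: shift)
  also have "(S *\<^sub>v z) \<bullet> w = (S *\<^sub>v z) \<bullet> (w - c \<cdot>\<^sub>v z)"
    using skew_scalar_prod_self[OF S_carrier S_skew z] S_carrier z w
    by (simp add: scalar_prod_minus_distrib[of _ n])
  finally show "q^2 dvd z \<bullet> (W *\<^sub>v shift_vec t)"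
    using vec_dvd_scalar_prod_sq[OF Sz Wt] S_carrier z by (simp add: w_def)
qed

lemma shift_image_vector_not_dvd:
  assumes z: "z \<in> carrier_vec n" and i: "i < n" "\<not> q dvd z $ i" and t: "t \<in> carrier_vec n"
    and t_last: "t $ (n - 1) = 0" and c: "\<not> q dvd c" and Wt: "vec_dvd q (W *\<^sub>v t - c \<cdot>\<^sub>v z)"
  shows "\<not> vec_dvd q (shift_vec t)"
proof
  assume "vec_dvd q (shift_vec t)"
  then have "vec_dvd q t"
    using vec_dvd_if_shift_vec_dvd t t_last by simp
  then have "vec_dvd q (W *\<^sub>v t)"
    using t by (intro vec_dvd_mult_mat_vec) auto
  then have "q dvd (W *\<^sub>v t) $ i - (W *\<^sub>v t - c \<cdot>\<^sub>v z) $ i"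
    using Wt i z by (intro dvd_diff) (simp_all add: vec_dvd_def)
  also have "(W *\<^sub>v t) $ i - (W *\<^sub>v t - c \<cdot>\<^sub>v z) $ i = c * z $ i"
    using i z by simp
  finally have "q dvd c * z $ i" .
  then show False
    using c i q_prime by (simp add: prime_dvd_mult_iff)
qed

end

locale walk_mod_prime_symmetry = walk_mod_prime +
  fixes X :: "int mat" and l :: int
  assumes X_carrier: "X \<in> carrier_mat n n"
    and X_square: "X * X = l^2 \<cdot>\<^sub>m 1\<^sub>m n"
    and X_anticommutes: "X * S = - (S * X)"
    and X_walk_vec: "\<And>k. transpose_mat X *\<^sub>v walk_vec n S k = (l * (-1)^k) \<cdot>\<^sub>v walk_vec n S k"
    and q_odd: "\<not> q dvd 2"
    and q_not_dvd_l: "\<not> q dvd l"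
begin

lemma X_mult_vec_carrier [simp]: "v \<in> carrier_vec n \<Longrightarrow> X *\<^sub>v v \<in> carrier_vec n"
  using mult_mat_vec_carrier[OF X_carrier] by blast

lemma transpose_walk_matrix_mult_X:
  assumes v: "v \<in> carrier_vec n"
  shows "transpose_mat W *\<^sub>v (X *\<^sub>v v) = vec n (\<lambda>k. l * (-1)^k * (transpose_mat W *\<^sub>v v) $ k)"
proof (rule eq_vecI)
  fix k assume "k < dim_vec (vec n (\<lambda>k. l * (-1)^k * (transpose_mat W *\<^sub>v v) $ k))"
  then have k: "k < n"
    by simp
  have "(transpose_mat W *\<^sub>v (X *\<^sub>v v)) $ k = walk_vec n S k \<bullet> (X *\<^sub>v v)"
    using v by (intro transpose_walk_matrix_mult_vec[OF S_carrier _ k]) simp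
  also have "\<dots> = (transpose_mat X *\<^sub>v walk_vec n S k) \<bullet> v"
    using transpose_vec_mult_scalar[OF X_carrier v walk_vec_carrier[OF S_carrier]] by simp
  also have "\<dots> = l * (-1)^k * (walk_vec n S k \<bullet> v)"
    using v S_carrier by (simp add: X_walk_vec)
  also have "walk_vec n S k \<bullet> v = (transpose_mat W *\<^sub>v v) $ k"
    by (rule transpose_walk_matrix_mult_vec[OF S_carrier v k, symmetric])
  finally show "(transpose_mat W *\<^sub>v (X *\<^sub>v v)) $ k = vec n (\<lambda>k. l * (-1)^k * (transpose_mat W *\<^sub>v v) $ k) $ k"
    using k by simp
qed simp

lemma left_kernel_eigenvector:
  assumes z: "z \<in> carrier_vec n" and Wz: "vec_dvd q (transpose_mat W *\<^sub>v z)"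
  obtains \<sigma> :: int where "\<sigma> = 1 \<or> \<sigma> = -1" and "vec_dvd q (X *\<^sub>v z - (\<sigma> * l) \<cdot>\<^sub>v z)"
proof -
  define a where "a = l \<cdot>\<^sub>v z + X *\<^sub>v z"
  define b where "b = l \<cdot>\<^sub>v z - X *\<^sub>v z"
  have a: "a \<in> carrier_vec n" and b: "b \<in> carrier_vec n"
    using z X_carrier by (auto simp: a_def b_def)
  have "X *\<^sub>v (X *\<^sub>v z) = (l^2 \<cdot>\<^sub>m 1\<^sub>m n) *\<^sub>v z"
    using z X_carrier by (simp add: assoc_mult_mat_vec[of X n n X n, symmetric] X_square)
  also have "\<dots> = l^2 \<cdot>\<^sub>v z"
    using z by (intro eq_vecI) auto
  finally have XXz: "X *\<^sub>v (X *\<^sub>v z) = l^2 \<cdot>\<^sub>v z" .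
  have "vec_dvd q (transpose_mat W *\<^sub>v a)" and "vec_dvd q (transpose_mat W *\<^sub>v b)"
    using Wz z X_carrier
    by (auto simp: vec_dvd_def a_def b_def mult_add_distrib_mat_vec[of _ n n] mult_minus_distrib_mat_vec[of _ n n]
        transpose_walk_matrix_mult_X intro!: dvd_add dvd_diff dvd_mult)
  moreover have "vec_dvd q (X *\<^sub>v a - l \<cdot>\<^sub>v a)" and "vec_dvd q (X *\<^sub>v b + l \<cdot>\<^sub>v b)"
    using z X_carrier XXz
    by (auto simp: vec_dvd_def a_def b_def mult_add_distrib_mat_vec[of _ n n] mult_minus_distrib_mat_vec[of _ n n]
        power2_eq_square algebra_simps)
  moreover have "\<not> q dvd 2 * l"
    using q_prime q_odd q_not_dvd_l by (simp add: prime_dvd_mult_iff)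
  ultimately have "vec_dvd q a \<or> vec_dvd q b"
    using opposite_eigenvector_dvd[of "transpose_mat W" n X a b q l] a b X_carrier q_prime det_not_sq_dvd
    by (auto simp: det_transpose[OF walk_matrix_carrier])
  then show ?thesis
  proof
    assume "vec_dvd q a"
    then show ?thesis
      using that[of "-1"] z X_carrier by (auto simp: vec_dvd_def a_def add.commute)
  next
    assume "vec_dvd q b"
    then show ?thesis
      using that[of 1] z X_carrier by (auto simp: vec_dvd_def b_def dvd_diff_commute)
  qed
qed

text \<open>\<open>S z\<close> is again a left kernel vector, but \<open>X\<close> acts on it by the opposite sign.\<close>

lemma left_kernel_skew_dvd:
  assumes z: "z \<in> carrier_vec n" and Wz: "vec_dvd q (transpose_mat W *\<^sub>v z)"
    and z_nz: "\<not> vec_dvd q z"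
  shows "vec_dvd q (S *\<^sub>v z)"
proof -
  obtain \<sigma> :: int where \<sigma>: "\<sigma> = 1 \<or> \<sigma> = -1" and Xz: "vec_dvd q (X *\<^sub>v z - (\<sigma> * l) \<cdot>\<^sub>v z)"
    using left_kernel_eigenvector[OF z Wz] by blast
  have "X *\<^sub>v (S *\<^sub>v z) = (X * S) *\<^sub>v z"
    using z X_carrier S_carrier by (simp add: assoc_mult_mat_vec[of _ n n _ n])
  also have "\<dots> = - (S *\<^sub>v (X *\<^sub>v z))"
    using z X_carrier S_carrier by (simp add: X_anticommutes assoc_mult_mat_vec[of _ n n _ n])
  finally have XS: "X *\<^sub>v (S *\<^sub>v z) = - (S *\<^sub>v (X *\<^sub>v z))" .
  have "S *\<^sub>v (X *\<^sub>v z - (\<sigma> * l) \<cdot>\<^sub>v z) = S *\<^sub>v (X *\<^sub>v z) - (\<sigma> * l) \<cdot>\<^sub>v (S *\<^sub>v z)"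
    using z S_carrier by (auto simp: mult_minus_distrib_mat_vec[of _ n n])
  then have "X *\<^sub>v (S *\<^sub>v z) + (\<sigma> * l) \<cdot>\<^sub>v (S *\<^sub>v z) = - (S *\<^sub>v (X *\<^sub>v z - (\<sigma> * l) \<cdot>\<^sub>v z))"
    unfolding XS using z by (intro eq_vecI) auto
  moreover have "vec_dvd q (S *\<^sub>v (X *\<^sub>v z - (\<sigma> * l) \<cdot>\<^sub>v z))"
    using z X_carrier S_carrier by (intro vec_dvd_mult_mat_vec[OF Xz]) simp
  ultimately have XSz: "vec_dvd q (X *\<^sub>v (S *\<^sub>v z) + (\<sigma> * l) \<cdot>\<^sub>v (S *\<^sub>v z))"
    by (simp add: vec_dvd_def)
  have "\<not> q dvd 2 * (\<sigma> * l)"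
    using \<sigma> q_prime q_odd q_not_dvd_l by (auto simp: prime_dvd_mult_iff)
  then show ?thesis
    using opposite_eigenvector_dvd[of "transpose_mat W" n X z "S *\<^sub>v z" q "\<sigma> * l"]
      z X_carrier q_prime det_not_sq_dvd Wz left_kernel_skew[OF z Wz z_nz] Xz XSz z_nz
    by (simp add: det_transpose[OF walk_matrix_carrier])
qed

lemma left_kernel_not_isotropic:
  assumes z: "z \<in> carrier_vec n" and Wz: "vec_dvd q (transpose_mat W *\<^sub>v z)"
    and z_nz: "\<not> vec_dvd q z"
  shows "\<not> q dvd z \<bullet> z"
proof
  assume zz: "q dvd z \<bullet> z"
  obtain i where i: "i < n" "\<not> q dvd z $ i"
    using z z_nz by (auto simp: vec_dvd_def)
  have qdet: "q dvd det W"
    by (rule dvd_det_if_left_kernel[OF z Wz z_nz])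
  then obtain c where c: "det W = q * c"
    by blast
  then have c_nz: "\<not> q dvd c"
    using det_not_sq_dvd by (auto simp: power2_eq_square)
  obtain t where t: "t \<in> carrier_vec n" and "W *\<^sub>v t = c \<cdot>\<^sub>v z"
    using isotropic_left_kernel_in_image[OF walk_matrix_carrier z q_prime c det_not_sq_dvd Wz i zz] by blast
  then have "vec_dvd q (W *\<^sub>v t - c \<cdot>\<^sub>v z)"
    using z by (simp add: vec_dvd_def)
  then obtain t' c' where t': "t' \<in> carrier_vec n" "t' $ (n - 1) = 0"
    and c': "\<not> q dvd c'" and Wt': "vec_dvd q (W *\<^sub>v t' - c' \<cdot>\<^sub>v z)"
    using image_vector_last_entry_zero[OF qdet z t _ c_nz] by blast
  have n: "0 < n"
    using i by simp
  note y = shift_image_vector[OF z left_kernel_skew_dvd[OF z Wz z_nz] t'(1) n t'(2) Wt']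
  have "\<not> vec_dvd q (shift_vec t')"
    by (rule shift_image_vector_not_dvd[OF z i t' c' Wt'])
  then obtain j where "j < n" "\<not> q dvd shift_vec t' $ j"
    using t' by (auto simp: vec_dvd_def shift_vec_def)
  then have "q^2 dvd det W"
    using sq_dvd_det_if_kernels_orthogonal[OF walk_matrix_carrier z _ q_prime Wz y(1) i] t' y(2) by simp
  then show False
    using det_not_sq_dvd by simp
qed

end

lemma prime_sq_not_dvd_pow2_mult_squarefree:
  fixes p m :: int
  assumes p: "prime p" "\<not> p dvd 2" and m: "squarefree m"
  shows "\<not> p^2 dvd 2^k * m"
proof
  assume dvd: "p^2 dvd 2^k * m"
  have "coprime p 2"
    by (rule prime_imp_coprime[OF p])
  then have "coprime (p^2) (2^k)"
    by simp
  then have "p^2 dvd m"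
    using dvd by (simp add: coprime_dvd_mult_right_iff)
  then have "is_unit p"
    using m by (simp add: squarefree_def)
  then show False
    using p(1) not_prime_unit by blast
qed

lemma odd_prime_not_dvd_two:
  assumes "prime p" and "odd p"
  shows "\<not> int p dvd 2"
proof
  assume "int p dvd 2"
  then have "int p \<le> 2"
    by (rule zdvd_imp_le) simp
  then show False
    using assms prime_ge_2_nat[of p] by simp
qed

theorem lemma3p9:
  fixes n :: nat and Arc :: "nat \<Rightarrow> nat \<Rightarrow> bool" and Q0 :: "rat mat"
    and p :: nat and z :: "int vec"
  assumes G: "in_G n Arc"
    and Q0: "regular_rat_orthogonal n Q0"
    and Q0_conj: "transpose_mat Q0 * map_mat of_int (skew_adj n Arc) * Q0
                  = map_mat of_int (skew_adj n (converse_graph Arc))"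
    and p: "prime p" "odd p"
    and pl: "\<not> p dvd level Q0"
    and zdim: "z \<in> carrier_vec n"
    and znz: "\<exists>i<n. \<not> int p dvd z $ i"
    and Wz: "\<forall>i<n. int p dvd (transpose_mat (W_of n Arc) *\<^sub>v z) $ i"
  shows "\<not> int p dvd (z \<bullet> z)"
proof -
  define S where "S = skew_adj n Arc"
  have og: "oriented_graph n Arc"
    using G by (simp add: in_G_def)
  obtain m where det: "det (walk_matrix n S) = 2 ^ (n div 2) * m" and "odd m" and "squarefree m"
    using G by (auto simp: in_G_def W_of_def S_def)
  have S_skew: "transpose_mat S = - S"
    unfolding S_def by (rule transpose_skew_adj[OF og])
  have "transpose_mat Q0 * map_mat of_int S * Q0 = - map_mat of_int S"
    using Q0_conj S_skew by (simp add: S_def skew_adj_converse_graph) (rule eq_matI; auto)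
  then obtain X where X: "X \<in> carrier_mat n n" "X * X = (int (level Q0))^2 \<cdot>\<^sub>m 1\<^sub>m n"
    "X * S = - (S * X)" "\<And>k. transpose_mat X *\<^sub>v walk_vec n S k = (int (level Q0) * (-1)^k) \<cdot>\<^sub>v walk_vec n S k"
    using integral_symmetry[OF Q0, of S] det \<open>odd m\<close> by (auto simp: S_def)
  interpret walk_mod_prime_symmetry n S "int p" X "int (level Q0)"
    using X S_skew det p pl odd_prime_not_dvd_two[OF p]
      prime_sq_not_dvd_pow2_mult_squarefree[of "int p" m] \<open>squarefree m\<close>
    by unfold_locales (auto simp: S_def)
  show ?thesis
    using left_kernel_not_isotropic[OF zdim] Wz znz zdim by (auto simp: vec_dvd_def W_of_def S_def)
qed

end
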